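(* Consider four neighboring particles located at $x_1<x_2=x_3<x_4$ with function values $u_1,u_2,u_3,u_4$, where the middle two particles (at $x_2=x_3$) are to be merged into a single particle $(x_{23},u_{23})$. Assume $f''>0$ on the range of the values, so that the colliding particles satisfy $u_2>u_3$ (for $f''<0$ all following inequality signs are reversed). If the resulting merged value $u_{23}$ satisfies $u_1\ge u_{23}\ge u_4$, then the Kružkov entropy does not increase due to the merge, i.e. for every $k\in\mathbb{R}$, \[ \int_{x_1}^{x_4}|\tilde u(x)-k|\,dx \le \int_{x_1}^{x_4}|u(x)-k|\,dx, \] where $u$ and $\tilde u$ denote the interpolating function on $[x_1,x_4]$ before and after the merge, respectively.
   Context: Setting: a particle method for the one-dimensional scalar conservation law $u_t+(f(u))_x=0$, $u(x,0)=u_0(x)$, with $f'$ continuous and $f$ strictly convex or concave on the range of particle values. Particles $(x_i,u_i)$, ordered $x_1<\dots<x_m$, move with their characteristic speeds $f'(u_i)$. Between two neighboring particles $(x_1,u_1),(x_2,u_2)$ with $u_1\ne u_2$ the solution is interpolated by $x(u)=x_1+\frac{f'(u)-f'(u_1)}{f'(u_2)-f'(u_1)}(x_2-x_1)$ (constant if $u_1=u_2$); the area under this interpolation between the two particles equals $(x_2-x_1)\,a(u_1,u_2)$ with the nonlinear average $a(u_1,u_2)=\frac{\int_{u_1}^{u_2}f''(u)\,u\,du}{\int_{u_1}^{u_2}f''(u)\,du}$. When particles 2 and 3 collide, they are replaced by a particle at $x_{23}=\frac{x_2+x_3}{2}$ with value $u_{23}$ chosen so that the total area between $x_1$ and $x_4$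 is unchanged: $(x_{23}-x_1)a(u_1,u_{23})+(x_4-x_{23})a(u_{23},u_4)=(x_2-x_1)a(u_1,u_2)+(x_3-x_2)a(u_2,u_3)+(x_4-x_3)a(u_3,u_4)$. The Kružkov entropy pair is $\eta_k(u)=|u-k|$, $q_k(u)=\mathrm{sign}(u-k)(f(u)-f(k))$, and the total entropy is $\int\eta_k(u(x))\,dx$. *)

theory Defs
  imports "HOL-Analysis.Analysis"
begin

text \<open>The orientation signs of numerator and denominator cancel, so we integrate over the
  unoriented interval; for u1 = u2 the average is u1 (constant interpolation).\<close>
definition nl_avg :: "(real \<Rightarrow> real) \<Rightarrow> real \<Rightarrow> real \<Rightarrow> real" where
  "nl_avg f'' u1 u2 =
     (if u1 = u2 then u1
      else integral {min u1 u2..max u1 u2} (\<lambda>u. f'' u * u)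
           / integral {min u1 u2..max u1 u2} (\<lambda>u. f'' u))"

definition interp :: "(real \<Rightarrow> real) \<Rightarrow> real \<Rightarrow> real \<Rightarrow> real \<Rightarrow> real \<Rightarrow> real \<Rightarrow> real" where
  "interp f' x1 u1 x2 u2 x =
     (if u1 = u2 then u1
      else (THE u. u \<in> closed_segment u1 u2 \<and>
                   x1 + (f' u - f' u1) / (f' u2 - f' u1) * (x2 - x1) = x))"

definition interp3 :: "(real \<Rightarrow> real) \<Rightarrow> real \<Rightarrow> real \<Rightarrow> real \<Rightarrow> real \<Rightarrow> real \<Rightarrow> real \<Rightarrow> real \<Rightarrow> real" where
  "interp3 f' x1 u1 xm um x4 u4 x =
     (if x \<le> xm then interp f' x1 u1 xm um x else interp f' xm um x4 u4 x)"

definition interp4 :: "(real \<Rightarrow> real) \<Rightarrow> real \<Rightarrow> real \<Rightarrow> real \<Rightarrow> real \<Rightarrow> real \<Rightarrow> real \<Rightarrow> real \<Rightarrow> real \<Rightarrow> real \<Rightarrow> real" where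
  "interp4 f' x1 u1 x2 u2 x3 u3 x4 u4 x =
     (if x \<le> x2 then interp f' x1 u1 x2 u2 x
      else if x \<le> x3 then interp f' x2 u2 x3 u3 x
      else interp f' x3 u3 x4 u4 x)"

end

theory Submission
  imports Defs
begin

text \<open>Let \<open>A\<close> be the profile after the merge and \<open>B\<close> the one before it; both consist of two
  interpolation pieces meeting at \<open>x2 = x3\<close>, and the area condition says \<open>\<integral> A = \<integral> B\<close>.
  Each piece is a linear function pulled back through the increasing map \<open>f'\<close>, so it is monotone
  in its endpoint values. With \<open>u4 \<le> u23 \<le> u1\<close> and \<open>u3 < u2\<close> this yields a sign \<open>s = \<plusminus>1\<close> such
  that at every point either \<open>A - B\<close> or \<open>A - k\<close> has sign \<open>s\<close>. Hence
  \<open>\<bar>A - k\<bar> \<le> \<bar>B - k\<bar> + s (A - B)\<close> pointwise, and integrating kills the last term.\<close>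

lemma strict_mono_on_DERIV_pos:
  fixes g g' :: "real \<Rightarrow> real"
  assumes deriv: "\<And>u. (g has_real_derivative g' u) (at u)"
    and pos: "\<And>u. u \<in> {lo..hi} \<Longrightarrow> g' u > 0"
  shows "strict_mono_on {lo..hi} g"
proof (rule strict_mono_onI)
  fix r s assume "r \<in> {lo..hi}" "s \<in> {lo..hi}" "r < s"
  then show "g r < g s"
    using DERIV_pos_imp_increasing[of r s g] deriv pos by force
qed

lemma inj_on_closed_segment_DERIV_pos:
  fixes f' f'' :: "real \<Rightarrow> real"
  assumes f'_deriv: "\<And>u. (f' has_real_derivative f'' u) (at u)"
    and pos: "\<And>u. u \<in> closed_segment a b \<Longrightarrow> f'' u > 0"
  shows "inj_on f' (closed_segment a b)"
proof -
  have "closed_segment a b = {min a b..max a b}"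
    by (simp add: closed_segment_eq_real_ivl)
  then show ?thesis
    using strict_mono_on_DERIV_pos[OF f'_deriv, of "min a b" "max a b"] pos
    by (simp add: strict_mono_on_imp_inj_on)
qed

lemma closed_segment_subset_interval:
  fixes a b :: real
  shows "a \<in> {lo..hi} \<Longrightarrow> b \<in> {lo..hi} \<Longrightarrow> closed_segment a b \<subseteq> {lo..hi}"
  by (auto simp: closed_segment_eq_real_ivl split: if_splits)

lemma interp_characterization:
  fixes f' :: "real \<Rightarrow> real"
  assumes cont: "continuous_on (closed_segment a b) f'"
    and inj: "inj_on f' (closed_segment a b)"
    and x12: "x1 < x2" and x: "x \<in> {x1..x2}"
  shows "interp f' x1 a x2 b x \<in> closed_segment a b"
    and "f' (interp f' x1 a x2 b x) = f' a + (x - x1) / (x2 - x1) * (f' b - f' a)"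
proof -
  define S where "S = closed_segment a b"
  define T where "T = f' a + (x - x1) / (x2 - x1) * (f' b - f' a)"
  have "interp f' x1 a x2 b x \<in> S \<and> f' (interp f' x1 a x2 b x) = T"
  proof (cases "a = b")
    case True
    then show ?thesis by (simp add: interp_def S_def T_def)
  next
    case False
    then have ne: "f' a \<noteq> f' b"
      using inj by (auto dest: inj_onD)
    define t where "t = (x - x1) / (x2 - x1)"
    have "0 \<le> t" "t \<le> 1"
      using x x12 by (auto simp: t_def divide_simps)
    then have "T \<in> closed_segment (f' a) (f' b)"
      unfolding T_def t_def[symmetric] closed_segment_def
      by (auto intro!: exI[of _ t] simp: algebra_simps)
    then obtain u where u: "u \<in> S" "f' u = T"
      using IVT'_closed_segment_real cont unfolding S_def by blast
    have level: "x1 + (f' v - f' a) / (f' b - f' a) * (x2 - x1) = x \<longleftrightarrow> f' v = T" for v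
      using ne x12 by (auto simp: T_def field_simps)
    have "(THE v. v \<in> S \<and> x1 + (f' v - f' a) / (f' b - f' a) * (x2 - x1) = x) = u"
      unfolding level using u inj by (auto simp: S_def intro!: the_equality dest: inj_onD)
    then show ?thesis
      using u False by (simp add: interp_def S_def)
  qed
  then show "interp f' x1 a x2 b x \<in> closed_segment a b"
    and "f' (interp f' x1 a x2 b x) = f' a + (x - x1) / (x2 - x1) * (f' b - f' a)"
    by (simp_all add: S_def T_def)
qed

lemma interp_mono:
  fixes f' :: "real \<Rightarrow> real"
  assumes mono: "strict_mono_on {lo..hi} f'" and cont: "continuous_on {lo..hi} f'"
    and ends: "a \<in> {lo..hi}" "b \<in> {lo..hi}" "a' \<in> {lo..hi}" "b' \<in> {lo..hi}"
    and le: "a \<le> a'" "b \<le> b'"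
    and x12: "x1 < x2" and x: "x \<in> {x1..x2}"
  shows "interp f' x1 a x2 b x \<le> interp f' x1 a' x2 b' x"
proof -
  have seg: "closed_segment c d \<subseteq> {lo..hi}" if "c \<in> {lo..hi}" "d \<in> {lo..hi}" for c d
    using that by (rule closed_segment_subset_interval)
  define t where "t = (x - x1) / (x2 - x1)"
  have char: "interp f' x1 c x2 d x \<in> {lo..hi}"
      "f' (interp f' x1 c x2 d x) = (1 - t) * f' c + t * f' d"
    if "c \<in> {lo..hi}" "d \<in> {lo..hi}" for c d
  proof -
    have "continuous_on (closed_segment c d) f'" "inj_on f' (closed_segment c d)"
      using seg[OF that] continuous_on_subset[OF cont]
        strict_mono_on_imp_inj_on[OF monotone_on_subset[OF mono]] by auto
    from interp_characterization[OF this x12 x] seg[OF that]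
    show "interp f' x1 c x2 d x \<in> {lo..hi}"
      and "f' (interp f' x1 c x2 d x) = (1 - t) * f' c + t * f' d"
      unfolding t_def[symmetric] by (auto simp: algebra_simps)
  qed
  have t: "0 \<le> t" "t \<le> 1"
    using x x12 by (auto simp: t_def divide_simps)
  have "f' a \<le> f' a'" "f' b \<le> f' b'"
    using ends le mono by (auto intro: strict_mono_on_leD)
  then have "(1 - t) * f' a + t * f' b \<le> (1 - t) * f' a' + t * f' b'"
    using t by (intro add_mono mult_left_mono) auto
  then show ?thesis
    using char[OF ends(1,2)] char[OF ends(3,4)] strict_mono_on_less_eq[OF mono] by metis
qed

lemma Legendre_has_real_derivative:
  fixes f f' f'' :: "real \<Rightarrow> real"
  assumes "(f has_real_derivative f' u) (at u)" "(f' has_real_derivative f'' u) (at u)"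
  shows "((\<lambda>u. u * f' u - f u) has_real_derivative u * f'' u) (at u)"
  using assms by (auto intro!: derivative_eq_intros)

lemma nl_avg_eq_difference_quotient:
  fixes f f' f'' :: "real \<Rightarrow> real"
  assumes f_deriv: "\<And>u. (f has_real_derivative f' u) (at u)"
    and f'_deriv: "\<And>u. (f' has_real_derivative f'' u) (at u)"
    and ne: "f' a \<noteq> f' b"
  shows "nl_avg f'' a b = ((b * f' b - f b) - (a * f' a - f a)) / (f' b - f' a)"
proof -
  define g where "g u = u * f' u - f u" for u
  have integrals: "integral {lo..hi} (\<lambda>u. f'' u * u) = g hi - g lo"
      "integral {lo..hi} f'' = f' hi - f' lo" if "lo \<le> hi" for lo hi
  proof -
    have "((\<lambda>u. f'' u * u) has_integral (g hi - g lo)) {lo..hi}"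
    proof (rule fundamental_theorem_of_calculus[OF that])
      fix u
      have "(g has_real_derivative u * f'' u) (at u)"
        unfolding g_def[abs_def] using f_deriv f'_deriv by (rule Legendre_has_real_derivative)
      then show "(g has_vector_derivative f'' u * u) (at u within {lo..hi})"
        by (simp add: has_real_derivative_iff_has_vector_derivative[symmetric]
            has_field_derivative_at_within mult.commute)
    qed
    moreover have "(f'' has_integral (f' hi - f' lo)) {lo..hi}"
      by (rule fundamental_theorem_of_calculus[OF that])
        (simp add: has_real_derivative_iff_has_vector_derivative[symmetric] has_field_derivative_at_within f'_deriv)
    ultimately show "integral {lo..hi} (\<lambda>u. f'' u * u) = g hi - g lo"
      "integral {lo..hi} f'' = f' hi - f' lo"
      by (simp_all add: integral_unique)
  qed
  have "nl_avg f'' a b = (g b - g a) / (f' b - f' a)"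
  proof (cases "a < b")
    case True
    then show ?thesis
      using integrals[of a b] by (simp add: nl_avg_def)
  next
    case False
    then have "b < a"
      using ne by (cases "a = b") auto
    then have "nl_avg f'' a b = (g a - g b) / (f' a - f' b)"
      using integrals[of b a] by (simp add: nl_avg_def)
    then show ?thesis
      by (metis minus_diff_eq minus_divide_divide)
  qed
  then show ?thesis
    by (simp add: g_def)
qed

lemma continuous_on_interp:
  fixes f' :: "real \<Rightarrow> real"
  assumes cont: "continuous_on (closed_segment a b) f'"
    and inj: "inj_on f' (closed_segment a b)"
    and x12: "x1 < x2"
  shows "continuous_on {x1..x2} (interp f' x1 a x2 b)"
proof -
  define S where "S = closed_segment a b"
  define L where "L x = f' a + (x - x1) / (x2 - x1) * (f' b - f' a)" for x
  have char: "interp f' x1 a x2 b x \<in> S" "f' (interp f' x1 a x2 b x) = L x"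
    if "x \<in> {x1..x2}" for x
    using interp_characterization[OF cont inj x12 that] by (simp_all add: S_def L_def)
  have "continuous_on (f' ` S) (the_inv_into S f')"
    using inj by (auto intro!: continuous_on_inv cont simp: S_def the_inv_into_f_f)
  moreover have "continuous_on {x1..x2} L"
    unfolding L_def using x12 by (intro continuous_intros) auto
  moreover have "L ` {x1..x2} \<subseteq> f' ` S"
    using char by (metis image_eqI image_subsetI)
  ultimately have "continuous_on {x1..x2} (\<lambda>x. the_inv_into S f' (L x))"
    by (rule continuous_on_compose2)
  moreover have "the_inv_into S f' (L x) = interp f' x1 a x2 b x" if "x \<in> {x1..x2}" for x
    using char[OF that] inj by (metis S_def the_inv_into_f_f)
  ultimately show ?thesis
    by (rule continuous_on_eq)
qed

lemma interp_has_real_derivative: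
  fixes f' f'' :: "real \<Rightarrow> real"
  assumes f'_deriv: "\<And>u. (f' has_real_derivative f'' u) (at u)"
    and pos: "\<And>u. u \<in> closed_segment a b \<Longrightarrow> f'' u > 0"
    and x: "x1 < x" "x < x2"
  shows "(interp f' x1 a x2 b has_real_derivative
           (f' b - f' a) / ((x2 - x1) * f'' (interp f' x1 a x2 b x))) (at x)"
proof (cases "a = b")
  case True
  then show ?thesis
    by (simp add: interp_def[abs_def])
next
  case False
  define U where "U = interp f' x1 a x2 b"
  have cont: "continuous_on (closed_segment a b) f'"
    using f'_deriv by (rule has_real_derivative_imp_continuous_on)
  have inj: "inj_on f' (closed_segment a b)"
    using f'_deriv pos by (rule inj_on_closed_segment_DERIV_pos)
  have ne: "f' a \<noteq> f' b"
    using inj False by (auto dest: inj_onD)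
  have x12: "x1 < x2"
    using x by simp
  have char: "U y \<in> closed_segment a b" "f' (U y) = f' a + (y - x1) / (x2 - x1) * (f' b - f' a)"
    if "y \<in> {x1..x2}" for y
    using interp_characterization[OF cont inj x12 that] by (simp_all add: U_def)
  define X where "X u = x1 + (f' u - f' a) / (f' b - f' a) * (x2 - x1)" for u
  have "(X has_real_derivative f'' (U x) / (f' b - f' a) * (x2 - x1)) (at (U x))"
    unfolding X_def using ne by (auto intro!: derivative_eq_intros f'_deriv)
  moreover have "f'' (U x) / (f' b - f' a) * (x2 - x1) \<noteq> 0"
    using pos char(1)[of x] x ne by fastforce
  moreover have "X (U y) = y" if "x1 < y" "y < x2" for y
    using char(2)[of y] that ne by (simp add: X_def field_simps)
  moreover have "isCont U x"
    using continuous_on_interior[OF continuous_on_interp[OF cont inj x12]] x by (simp add: U_def)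
  ultimately have "(U has_real_derivative inverse (f'' (U x) / (f' b - f' a) * (x2 - x1))) (at x)"
    using x by (intro DERIV_inverse_function[where a = x1 and b = x2]) auto
  then show ?thesis
    by (simp add: U_def field_simps)
qed

lemma interp_has_integral:
  fixes f f' f'' :: "real \<Rightarrow> real"
  assumes f_deriv: "\<And>u. (f has_real_derivative f' u) (at u)"
    and f'_deriv: "\<And>u. (f' has_real_derivative f'' u) (at u)"
    and pos: "\<And>u. u \<in> closed_segment a b \<Longrightarrow> f'' u > 0"
    and x12: "x1 < x2"
  shows "(interp f' x1 a x2 b has_integral ((x2 - x1) * nl_avg f'' a b)) {x1..x2}"
proof (cases "a = b")
  case True
  then show ?thesis
    using has_integral_const_real[of a x1 x2] x12
    by (simp add: interp_def[abs_def] nl_avg_def mult.commute)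
next
  case False
  define U where "U = interp f' x1 a x2 b"
  have cont: "continuous_on (closed_segment a b) f'"
    using f'_deriv by (rule has_real_derivative_imp_continuous_on)
  have inj: "inj_on f' (closed_segment a b)"
    using f'_deriv pos by (rule inj_on_closed_segment_DERIV_pos)
  have ne: "f' a \<noteq> f' b"
    using inj False by (auto dest: inj_onD)
  have U_ends: "U x1 = a" "U x2 = b"
    using interp_characterization[OF cont inj x12, of x1] interp_characterization[OF cont inj x12, of x2]
      inj x12 by (auto simp: U_def dest: inj_onD)
  have cU: "continuous_on {x1..x2} U"
    unfolding U_def using cont inj x12 by (rule continuous_on_interp)
  define g where "g u = u * f' u - f u" for u
  have g_deriv: "(g has_real_derivative u * f'' u) (at u)" for u
    unfolding g_def[abs_def] using f_deriv f'_deriv by (rule Legendre_has_real_derivative)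
  text \<open>\<open>f' \<circ> U\<close> is affine with slope \<open>1 / c\<close>, so \<open>(c g(U))' = c U f''(U) U' = U\<close>.\<close>
  define c where "c = (x2 - x1) / (f' b - f' a)"
  have "(U has_integral (c * g (U x2) - c * g (U x1))) {x1..x2}"
  proof (rule fundamental_theorem_of_calculus_interior_strong[of "{}"])
    show "continuous_on {x1..x2} (\<lambda>x. c * g (U x))"
      using g_deriv
      by (intro continuous_intros continuous_on_compose2[OF _ cU, of UNIV]
          has_real_derivative_imp_continuous_on) auto
    fix x assume "x \<in> {x1<..<x2} - {}"
    then have dU: "(U has_real_derivative (f' b - f' a) / ((x2 - x1) * f'' (U x))) (at x)"
      and pos_x: "f'' (U x) > 0"
      using interp_has_real_derivative[OF f'_deriv pos] pos
        interp_characterization(1)[OF cont inj x12, of x] by (auto simp: U_def)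
    have "((\<lambda>x. c * g (U x)) has_real_derivative
        c * (U x * f'' (U x) * ((f' b - f' a) / ((x2 - x1) * f'' (U x))))) (at x)"
      by (intro DERIV_cmult DERIV_chain2[OF g_deriv dU])
    also have "c * (U x * f'' (U x) * ((f' b - f' a) / ((x2 - x1) * f'' (U x)))) = U x"
      using ne x12 pos_x by (simp add: c_def)
    finally have "((\<lambda>x. c * g (U x)) has_real_derivative U x) (at x)" .
    then show "((\<lambda>x. c * g (U x)) has_vector_derivative U x) (at x)"
      by (simp add: has_real_derivative_iff_has_vector_derivative)
  qed (use x12 in auto)
  moreover have "c * g (U x2) - c * g (U x1) = (x2 - x1) * nl_avg f'' a b"
  proof -
    have "c * g (U x2) - c * g (U x1) = (x2 - x1) * ((g b - g a) / (f' b - f' a))"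
      unfolding U_ends c_def right_diff_distrib[symmetric] by simp
    also have "\<dots> = (x2 - x1) * nl_avg f'' a b"
      by (simp add: g_def nl_avg_eq_difference_quotient[OF f_deriv f'_deriv ne])
    finally show ?thesis .
  qed
  ultimately show ?thesis
    by (simp add: U_def)
qed

lemma has_integral_if_le:
  fixes P Q :: "real \<Rightarrow> real"
  assumes "x1 \<le> xm" "xm \<le> x4"
    and P: "(P has_integral i) {x1..xm}" and Q: "(Q has_integral j) {xm..x4}"
  shows "((\<lambda>x. if x \<le> xm then P x else Q x) has_integral (i + j)) {x1..x4}"
proof (rule has_integral_combine[OF assms(1,2)])
  show "((\<lambda>x. if x \<le> xm then P x else Q x) has_integral i) {x1..xm}"
    by (rule has_integral_spike_finite[OF _ _ P, of "{}"]) auto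
  show "((\<lambda>x. if x \<le> xm then P x else Q x) has_integral j) {xm..x4}"
    by (rule has_integral_spike_finite[OF _ _ Q, of "{xm}"]) auto
qed

definition interp_jump ::
    "(real \<Rightarrow> real) \<Rightarrow> real \<Rightarrow> real \<Rightarrow> real \<Rightarrow> real \<Rightarrow> real \<Rightarrow> real \<Rightarrow> real \<Rightarrow> real \<Rightarrow> real" where
  "interp_jump f' x1 u1 xm ul ur x4 u4 x =
     (if x \<le> xm then interp f' x1 u1 xm ul x else interp f' xm ur x4 u4 x)"

lemma interp3_eq_interp_jump:
  "interp3 f' x1 u1 xm um x4 u4 = interp_jump f' x1 u1 xm um um x4 u4"
  by (simp add: fun_eq_iff interp3_def interp_jump_def)

lemma interp4_eq_interp_jump:
  "x2 = x3 \<Longrightarrow> interp4 f' x1 u1 x2 u2 x3 u3 x4 u4 = interp_jump f' x1 u1 x2 u2 u3 x4 u4"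
  by (simp add: fun_eq_iff interp4_def interp_jump_def)

lemma has_integral_interp_jump:
  fixes f f' f'' :: "real \<Rightarrow> real"
  assumes f_deriv: "\<And>u. (f has_real_derivative f' u) (at u)"
    and f'_deriv: "\<And>u. (f' has_real_derivative f'' u) (at u)"
    and pos: "\<And>u. u \<in> {lo..hi} \<Longrightarrow> f'' u > 0"
    and vals: "u1 \<in> {lo..hi}" "ul \<in> {lo..hi}" "ur \<in> {lo..hi}" "u4 \<in> {lo..hi}"
    and order: "x1 < xm" "xm < x4"
  shows "(interp_jump f' x1 u1 xm ul ur x4 u4 has_integral
           ((xm - x1) * nl_avg f'' u1 ul + (x4 - xm) * nl_avg f'' ur u4)) {x1..x4}"
  unfolding interp_jump_def[abs_def] using order vals
  by (intro has_integral_if_le interp_has_integral[OF f_deriv f'_deriv]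
      pos[OF subsetD[OF closed_segment_subset_interval]]) auto

lemma abs_interp_jump_integrable:
  fixes f' :: "real \<Rightarrow> real"
  assumes mono: "strict_mono_on {lo..hi} f'" and cont: "continuous_on {lo..hi} f'"
    and vals: "u1 \<in> {lo..hi}" "ul \<in> {lo..hi}" "ur \<in> {lo..hi}" "u4 \<in> {lo..hi}"
    and order: "x1 < xm" "xm < x4"
  shows "(\<lambda>x. \<bar>interp_jump f' x1 u1 xm ul ur x4 u4 x - k\<bar>) integrable_on {x1..x4}"
proof -
  have cont_piece: "continuous_on {y1..y2} (\<lambda>x. \<bar>interp f' y1 a y2 b x - k\<bar>)"
    if "a \<in> {lo..hi}" "b \<in> {lo..hi}" "y1 < y2" for a b y1 y2
  proof -
    have "closed_segment a b \<subseteq> {lo..hi}"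
      using that(1,2) by (rule closed_segment_subset_interval)
    then have "continuous_on (closed_segment a b) f'" "inj_on f' (closed_segment a b)"
      using continuous_on_subset[OF cont] strict_mono_on_imp_inj_on[OF monotone_on_subset[OF mono]]
      by auto
    then show ?thesis
      using that by (intro continuous_intros continuous_on_interp)
  qed
  have "(\<lambda>x. \<bar>interp_jump f' x1 u1 xm ul ur x4 u4 x - k\<bar>)
      = (\<lambda>x. if x \<le> xm then \<bar>interp f' x1 u1 xm ul x - k\<bar> else \<bar>interp f' xm ur x4 u4 x - k\<bar>)"
    by (simp add: fun_eq_iff interp_jump_def)
  moreover have "((\<lambda>x. if x \<le> xm then \<bar>interp f' x1 u1 xm ul x - k\<bar> else \<bar>interp f' xm ur x4 u4 x - k\<bar>)
      has_integral (integral {x1..xm} (\<lambda>x. \<bar>interp f' x1 u1 xm ul x - k\<bar>)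
                  + integral {xm..x4} (\<lambda>x. \<bar>interp f' xm ur x4 u4 x - k\<bar>))) {x1..x4}"
    using order vals
    by (intro has_integral_if_le integrable_integral integrable_continuous_interval cont_piece) auto
  ultimately show ?thesis
    by (metis integrable_on_def)
qed

lemma integral_abs_diff_le_of_same_integral:
  fixes A B :: "real \<Rightarrow> real"
  assumes A: "(A has_integral m) S" and B: "(B has_integral m) S"
    and absA: "(\<lambda>x. \<bar>A x - k\<bar>) integrable_on S" and absB: "(\<lambda>x. \<bar>B x - k\<bar>) integrable_on S"
    and sign: "(\<forall>x\<in>S. B x \<le> A x \<or> k \<le> A x) \<or> (\<forall>x\<in>S. A x \<le> B x \<or> A x \<le> k)"
  shows "integral S (\<lambda>x. \<bar>A x - k\<bar>) \<le> integral S (\<lambda>x. \<bar>B x - k\<bar>)"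
proof -
  obtain s :: real where s: "\<And>x. x \<in> S \<Longrightarrow> \<bar>A x - k\<bar> \<le> \<bar>B x - k\<bar> + s * (A x - B x)"
  proof (cases "\<forall>x\<in>S. B x \<le> A x \<or> k \<le> A x")
    case True
    then show thesis
      by (intro that[of 1]) auto
  next
    case False
    then show thesis
      using sign by (intro that[of "-1"]) auto
  qed
  have "((\<lambda>x. \<bar>B x - k\<bar> + s * (A x - B x)) has_integral
      (integral S (\<lambda>x. \<bar>B x - k\<bar>) + s * (m - m))) S"
    by (intro has_integral_add has_integral_mult_right has_integral_diff A B integrable_integral absB)
  then show ?thesis
    using has_integral_le[OF integrable_integral[OF absA] _ s] by simp
qed

lemma merge_pointwise_dichotomy:
  fixes f' :: "real \<Rightarrow> real"
  assumes mono: "strict_mono_on {lo..hi} f'" and cont: "continuous_on {lo..hi} f'"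
    and vals: "u1 \<in> {lo..hi}" "u2 \<in> {lo..hi}" "u3 \<in> {lo..hi}" "u4 \<in> {lo..hi}" "u23 \<in> {lo..hi}"
    and order: "x1 < x2" "x2 < x4"
    and collide: "u3 < u2" and bounds: "u4 \<le> u23" "u23 \<le> u1"
  defines "A \<equiv> interp_jump f' x1 u1 x2 u23 u23 x4 u4"
    and "B \<equiv> interp_jump f' x1 u1 x2 u2 u3 x4 u4"
  shows "(\<forall>x\<in>{x1..x4}. B x \<le> A x \<or> k \<le> A x) \<or> (\<forall>x\<in>{x1..x4}. A x \<le> B x \<or> A x \<le> k)"
proof -
  note left_mono = interp_mono[OF mono cont _ _ _ _ _ _ order(1)]
  note right_mono = interp_mono[OF mono cont _ _ _ _ _ _ order(2)]
  have const: "interp f' y1 u y2 u x = u" for y1 y2 u x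
    by (simp add: interp_def)
  have left: "u23 \<le> A x" "u23 \<le> u2 \<Longrightarrow> A x \<le> B x" "u2 \<le> u23 \<Longrightarrow> B x \<le> A x"
    if "x \<in> {x1..x2}" for x
    using that vals bounds left_mono[of u23 u23 u1 u23 x, unfolded const]
      left_mono[of u1 u23 u1 u2 x] left_mono[of u1 u2 u1 u23 x]
    by (auto simp: A_def B_def interp_jump_def)
  have right: "A x \<le> u23" "u23 \<le> u3 \<Longrightarrow> A x \<le> B x" "u3 \<le> u23 \<Longrightarrow> B x \<le> A x"
    if "x \<in> {x2<..x4}" for x
    using that vals bounds right_mono[of u23 u4 u23 u23 x, unfolded const]
      right_mono[of u23 u4 u3 u4 x] right_mono[of u3 u4 u23 u4 x]
    by (auto simp: A_def B_def interp_jump_def)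
  have split: "x \<in> {x1..x2} \<or> x \<in> {x2<..x4}" if "x \<in> {x1..x4}" for x
    using that by auto
  consider "k \<le> u23" "u3 \<le> u23" | "u23 \<le> u3" | "u23 \<le> k" "u23 \<le> u2" | "u2 \<le> u23"
    by linarith
  then show ?thesis
  proof cases
    case 1
    then show ?thesis
      using left(1) right(3) split by (meson order_trans)
  next
    case 2
    then show ?thesis
      using left(2) right(2) split collide by (meson less_imp_le order_trans)
  next
    case 3
    then show ?thesis
      using left(2) right(1) split by (meson order_trans)
  next
    case 4
    then show ?thesis
      using left(3) right(3) split collide by (meson less_imp_le order_trans)
  qed
qed

theorem lemma5:
  fixes f f' f'' :: "real \<Rightarrow> real"
    and x1 x2 x3 x4 u1 u2 u3 u4 u23 k :: real
  assumes f_deriv: "\<And>u. (f has_real_derivative f' u) (at u)"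
    and f'_deriv: "\<And>u. (f' has_real_derivative f'' u) (at u)"
    and convex: "\<And>u. u \<in> {Min {u1, u2, u3, u4} .. Max {u1, u2, u3, u4}} \<Longrightarrow> f'' u > 0"
    and order: "x1 < x2" "x2 = x3" "x3 < x4"
    and collide: "u2 > u3"
    and area: "((x2 + x3) / 2 - x1) * nl_avg f'' u1 u23 + (x4 - (x2 + x3) / 2) * nl_avg f'' u23 u4
               = (x2 - x1) * nl_avg f'' u1 u2 + (x3 - x2) * nl_avg f'' u2 u3
                 + (x4 - x3) * nl_avg f'' u3 u4"
    and bounds: "u1 \<ge> u23" "u23 \<ge> u4"
  shows "integral {x1..x4} (\<lambda>x. \<bar>interp3 f' x1 u1 ((x2 + x3) / 2) u23 x4 u4 x - k\<bar>)
         \<le> integral {x1..x4} (\<lambda>x. \<bar>interp4 f' x1 u1 x2 u2 x3 u3 x4 u4 x - k\<bar>)"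
proof -
  define lo where "lo = Min {u1, u2, u3, u4}"
  define hi where "hi = Max {u1, u2, u3, u4}"
  have pos: "\<And>u. u \<in> {lo..hi} \<Longrightarrow> f'' u > 0"
    using convex by (simp add: lo_def hi_def)
  have vals: "u1 \<in> {lo..hi}" "u2 \<in> {lo..hi}" "u3 \<in> {lo..hi}" "u4 \<in> {lo..hi}" "u23 \<in> {lo..hi}"
    using bounds by (auto simp: lo_def hi_def)
  have mono: "strict_mono_on {lo..hi} f'"
    using f'_deriv pos by (rule strict_mono_on_DERIV_pos)
  have cont: "continuous_on {lo..hi} f'"
    using f'_deriv by (rule has_real_derivative_imp_continuous_on)
  have mid: "(x2 + x3) / 2 = x2" and x24: "x2 < x4"
    using order by auto
  have "(interp_jump f' x1 u1 x2 u23 u23 x4 u4 has_integral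
          ((x2 - x1) * nl_avg f'' u1 u2 + (x4 - x2) * nl_avg f'' u3 u4)) {x1..x4}"
    using has_integral_interp_jump[OF f_deriv f'_deriv pos vals(1,5,5,4) order(1) x24] area order
    by (simp add: mid)
  moreover have "(interp_jump f' x1 u1 x2 u2 u3 x4 u4 has_integral
          ((x2 - x1) * nl_avg f'' u1 u2 + (x4 - x2) * nl_avg f'' u3 u4)) {x1..x4}"
    by (rule has_integral_interp_jump[OF f_deriv f'_deriv pos vals(1-4) order(1) x24])
  ultimately show ?thesis
    unfolding mid interp3_eq_interp_jump interp4_eq_interp_jump[OF order(2)]
    using abs_interp_jump_integrable[OF mono cont] vals order(1) x24
      merge_pointwise_dichotomy[OF mono cont vals order(1) x24 collide bounds(2,1)]
    by (intro integral_abs_diff_le_of_same_integral) auto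
qed

end
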